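(* Let $a\in(-1,0)$ and let $f:\mathbb{R}\to\mathbb{R}$ be a smooth odd function, $f(-x_1)=-f(x_1)$, with $f(x_1)\neq 0$ for all $x_1\in[-2\sqrt{3}/9,\,0)$. For $\alpha\in\mathbb{R}$ consider the planar system $$\frac{dx_1}{dt}=F_1(x;\alpha)=a x_1+x_2+\tfrac32 a x_1x_2+\tfrac32 x_2^2+\alpha f(x_1),\qquad \frac{dx_2}{dt}=F_2(x)=x_1+a x_2+a x_2^2 .$$ Then, as $\alpha$ is varied in a neighbourhood of $0$, this system undergoes a supercritical homoclinic bifurcation in a generic way, i.e. at $\alpha=0$ the following hold: (i) the origin is a saddle fixed point with Jacobian eigenvalues $\lambda_1(0)<0<\lambda_2(0)$; (ii) there is a homoclinic orbit $\gamma^*$ to the origin (namely the alpha loop $\{(x_1,x_2): -x_1^2+x_2^2(1+x_2)=0,\ x_2<0\}$); (iii) the saddle quantity $\sigma_0=\lambda_1(0)+\lambda_2(0)$ is nonzero, and in fact $\sigma_0<0$; (iv) the Melnikov integral $$M(0)=\int_{-\infty}^{+\infty}\varphi(t)\Big(F_1\frac{\partial F_2}{\partial\alpha}-F_2\frac{\partial F_1}{\partial\alpha}\Big)\Big|_{x=x(t),\,\alpha=0}\,dt,\qquad \varphi(t)=\exp\Big(-\int_0^t (\nabla\cdot F)(x(\tau);0)\,d\tau\Big),$$ evaluated along the homoclinic orbit $x(t)$ (parametrised so that $x(0)=(0,-1)$), is nonzero.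
   Context: A homoclinic orbit to a fixed point $x^*$ is an orbit whose $\alpha$-limit and $\omega$-limit sets both equal $\{x^*\}$. Conditions (i)–(iv) are the bifurcation and genericity conditions of the Andronov–Leontovich theorem; when they hold, for all sufficiently small $|\alpha|$ a unique limit cycle bifurcates from $\gamma^*$ in a neighbourhood of the saddle and the homoclinic orbit, and the bifurcation is called supercritical when $\sigma_0<0$ (the bifurcating limit cycle is then stable). *)

theory Defs
  imports "HOL-Analysis.Analysis"
begin

definition F1 :: "real \<Rightarrow> (real \<Rightarrow> real) \<Rightarrow> real \<Rightarrow> real \<Rightarrow> real \<Rightarrow> real" where
  "F1 a f \<alpha> x1 x2 = a*x1 + x2 + 3/2*a*x1*x2 + 3/2*x2^2 + \<alpha> * f x1"

text \<open>F2 does not depend on alpha; the parameter is kept for uniformity.\<close>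
definition F2 :: "real \<Rightarrow> real \<Rightarrow> real \<Rightarrow> real \<Rightarrow> real" where
  "F2 a \<alpha> x1 x2 = x1 + a*x2 + a*x2^2"

definition Fv :: "real \<Rightarrow> (real \<Rightarrow> real) \<Rightarrow> real \<Rightarrow> real^2 \<Rightarrow> real^2" where
  "Fv a f \<alpha> p = (\<chi> i. if i = 1 then F1 a f \<alpha> (p$1) (p$2) else F2 a \<alpha> (p$1) (p$2))"

definition divF :: "real \<Rightarrow> (real \<Rightarrow> real) \<Rightarrow> real \<Rightarrow> real^2 \<Rightarrow> real" where
  "divF a f \<alpha> p = deriv (\<lambda>y. F1 a f \<alpha> y (p$2)) (p$1) + deriv (\<lambda>y. F2 a \<alpha> (p$1) y) (p$2)"

definition oint :: "real \<Rightarrow> (real \<Rightarrow> real) \<Rightarrow> real" where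
  "oint t g = (if 0 \<le> t then integral {0..t} g else - integral {t..0} g)"

definition melnikov_integrand ::
  "real \<Rightarrow> (real \<Rightarrow> real) \<Rightarrow> (real \<Rightarrow> real^2) \<Rightarrow> real \<Rightarrow> real" where
  "melnikov_integrand a f x t =
     exp (- oint t (\<lambda>\<tau>. divF a f 0 (x \<tau>))) *
     (F1 a f 0 (x t $ 1) (x t $ 2) * deriv (\<lambda>\<alpha>. F2 a \<alpha> (x t $ 1) (x t $ 2)) 0
      - F2 a 0 (x t $ 1) (x t $ 2) * deriv (\<lambda>\<alpha>. F1 a f \<alpha> (x t $ 1) (x t $ 2)) 0)"

definition omega_limit :: "(real \<Rightarrow> 'a::metric_space) \<Rightarrow> 'a set" where
  "omega_limit x = {p. \<exists>s. filterlim s at_top sequentially \<and> (x \<circ> s) \<longlonglongrightarrow> p}"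

definition alpha_limit :: "(real \<Rightarrow> 'a::metric_space) \<Rightarrow> 'a set" where
  "alpha_limit x = {p. \<exists>s. filterlim s at_bot sequentially \<and> (x \<circ> s) \<longlonglongrightarrow> p}"

end

theory Submission
  imports Defs
begin

text \<open>The alpha loop is rationally parametrised by \<open>v = -x\<^sub>1/x\<^sub>2 \<in> (-1, 1)\<close> as
  \<open>x = ((1 - v\<^sup>2) v, v\<^sup>2 - 1)\<close>, and on it the vector field at \<open>\<alpha> = 0\<close> reduces to the scalar
  equation \<open>v' = (1 - v\<^sup>2)(1 - a v)/2\<close>. Its solution is the inverse of an explicit time map
  (a sum of logarithms) which maps \<open>(-1, 1)\<close> onto \<open>\<real>\<close>, so the loop is traversed in infinite
  time in both directions and is a homoclinic orbit of the saddle at the origin, whose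
  eigenvalues are \<open>a \<plusminus> 1\<close>.

  The divergence along the orbit is \<open>a (2 + 7/2 x\<^sub>2)\<close>, so the weight \<open>\<phi>\<close> is again explicit in \<open>v\<close>,
  and substituting \<open>t = T(v)\<close> turns the Melnikov integral into
  \<open>\<integral>\<^sub>-\<^sub>1\<^sup>1 -2 v \<phi>(v) f((1 - v\<^sup>2) v) dv\<close>. As \<open>|(1 - v\<^sup>2) v| \<le> 2\<surd>3/9\<close>, oddness of \<open>f\<close> and the
  absence of zeros of \<open>f\<close> on \<open>[-2\<surd>3/9, 0)\<close> give the integrand one strict sign for \<open>v \<noteq> 0\<close>;
  it is bounded because \<open>f(y) = O(y)\<close> and \<open>\<phi>(v)(1 - v\<^sup>2)\<close> stays bounded.\<close>

lemma omega_limit_tendsto: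
  fixes x :: "real \<Rightarrow> 'a::metric_space"
  assumes "(x \<longlongrightarrow> p) at_top"
  shows "omega_limit x = {p}"
proof -
  have "(x \<circ> s) \<longlonglongrightarrow> p" if "filterlim s at_top sequentially" for s
    using filterlim_compose[OF assms that] by (simp add: o_def)
  then show ?thesis
    using filterlim_real_sequentially by (auto simp: omega_limit_def intro: LIMSEQ_unique)
qed

lemma alpha_limit_tendsto:
  fixes x :: "real \<Rightarrow> 'a::metric_space"
  assumes "(x \<longlongrightarrow> p) at_bot"
  shows "alpha_limit x = {p}"
proof -
  have "(x \<circ> s) \<longlonglongrightarrow> p" if "filterlim s at_bot sequentially" for s
    using filterlim_compose[OF assms that] by (simp add: o_def)
  moreover have "filterlim (\<lambda>n. - real n) at_bot sequentially"
    by (simp add: filterlim_uminus_at_bot filterlim_real_sequentially)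
  ultimately show ?thesis by (auto simp: alpha_limit_def intro: LIMSEQ_unique)
qed

lemma integral_pos_if_pos_on_subinterval:
  fixes g :: "real \<Rightarrow> real"
  assumes "g integrable_on S" "\<And>x. x \<in> S \<Longrightarrow> 0 \<le> g x"
    and "c < d" "{c..d} \<subseteq> S" "continuous_on {c..d} g" "\<And>x. x \<in> {c<..<d} \<Longrightarrow> 0 < g x"
  shows "0 < integral S g"
proof -
  have "integral {c..d} (\<lambda>_. 0) < integral {c..d} g"
    using assms(3,5,6) by (intro integral_less_real) auto
  also have "\<dots> \<le> integral S g"
    using assms(1,2,4,5) by (intro integral_subset_le integrable_continuous_real) auto
  finally show ?thesis by simp
qed

lemma continuous_zero_free_same_sign:
  fixes g :: "real \<Rightarrow> real"
  assumes "continuous_on {c..<d} g" "\<And>x. x \<in> {c..<d} \<Longrightarrow> g x \<noteq> 0" "x \<in> {c..<d}"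
  shows "0 < g x * g c"
proof (rule ccontr)
  assume "\<not> 0 < g x * g c"
  moreover have "g x \<noteq> 0" "g c \<noteq> 0" using assms(2,3) by auto
  ultimately have "g x \<le> 0 \<and> 0 \<le> g c \<or> g c \<le> 0 \<and> 0 \<le> g x"
    by (auto simp: zero_less_mult_iff not_less)
  moreover have "continuous_on {c..x} g"
    using assms(3) by (intro continuous_on_subset[OF assms(1)]) auto
  ultimately obtain y where "c \<le> y" "y \<le> x" "g y = 0"
    using IVT'[of g c 0 x] IVT2'[of g x 0 c] assms(3) by auto
  with assms(2,3) show False by auto
qed

lemma linear_bound_near_zero:
  fixes g :: "real \<Rightarrow> real"
  assumes "\<And>x. g differentiable (at x)" "\<And>x. isCont (deriv g) x" "g 0 = 0"
  shows "\<exists>K\<ge>0. \<forall>y. \<bar>y\<bar> \<le> 1 \<longrightarrow> \<bar>g y\<bar> \<le> K * \<bar>y\<bar>"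
proof -
  have "compact (deriv g ` {-1..1})"
    using assms(2) by (intro compact_continuous_image continuous_at_imp_continuous_on) auto
  then obtain K where K: "\<And>z. z \<in> {-1..1} \<Longrightarrow> \<bar>deriv g z\<bar> \<le> K"
    by (metis compact_imp_bounded bounded_iff imageI real_norm_def)
  have "\<bar>g y - g 0\<bar> \<le> K * \<bar>y - 0\<bar>" if "\<bar>y\<bar> \<le> 1" for y
    using that assms(1) K
    by (intro field_differentiable_bound[of "{-1..1}" g "deriv g", unfolded real_norm_def])
       (auto intro: has_field_derivative_at_within simp: DERIV_deriv_iff_real_differentiable)
  moreover have "0 \<le> K" using K[of 0] by auto
  ultimately show ?thesis using assms(3) by auto
qed

lemma vector_2_eq_axis: "(vector [x, y] :: real^2) = x *\<^sub>R axis 1 1 + y *\<^sub>R axis 2 1"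
  by (simp add: vec_eq_iff forall_2 axis_def)

section \<open>The saddle at the origin\<close>

definition linearisation :: "real \<Rightarrow> real^2 \<Rightarrow> real^2" where
  "linearisation a h = vector [a * h$1 + h$2, h$1 + a * h$2]"

lemma Fv_origin: "Fv a f 0 0 = 0"
  by (simp add: vec_eq_iff forall_2 Fv_def F1_def F2_def)

lemma Fv_has_derivative_origin: "(Fv a f 0 has_derivative linearisation a) (at 0)"
proof -
  have "Fv a f 0 = (\<lambda>p. (a * p$1 + p$2 + 3/2 * a * p$1 * p$2 + 3/2 * (p$2)^2) *\<^sub>R axis 1 1
                     + (p$1 + a * p$2 + a * (p$2)^2) *\<^sub>R axis 2 1)"
    by (simp add: fun_eq_iff vec_eq_iff forall_2 Fv_def F1_def F2_def axis_def)
  moreover have "((\<lambda>p. p $ i) has_derivative (\<lambda>h. h $ i)) (at p)" for i and p :: "real^2"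
    by (rule bounded_linear_imp_has_derivative[OF bounded_linear_vec_nth])
  ultimately show ?thesis
    unfolding linearisation_def[abs_def] vector_2_eq_axis
    by (auto intro!: derivative_eq_intros ext simp: algebra_simps)
qed

lemma eigenvalues_linearisation:
  "{l. \<exists>v. v \<noteq> 0 \<and> matrix (linearisation a) *v v = l *\<^sub>R v} = {a - 1, a + 1}"
proof -
  have "linear (linearisation a)" by (rule has_derivative_linear[OF Fv_has_derivative_origin])
  then have matrix_mult: "matrix (linearisation a) *v v = linearisation a v" for v
    by (simp add: matrix_works linear_def scalar_mult_eq_scaleR)
  have eigen: "linearisation a v = l *\<^sub>R v \<longleftrightarrow> v$2 = (l - a) * v$1 \<and> v$1 = (l - a) * v$2" for v l
    by (auto simp: linearisation_def vec_eq_iff forall_2 algebra_simps)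
  have nonzero: "v \<noteq> 0 \<longleftrightarrow> v$1 \<noteq> 0 \<or> v$2 \<noteq> 0" for v :: "real^2"
    by (auto simp: vec_eq_iff forall_2)
  have "(\<exists>v :: real^2. v \<noteq> 0 \<and> v$2 = (l - a) * v$1 \<and> v$1 = (l - a) * v$2) \<longleftrightarrow> (l - a)^2 = 1" for l
  proof
    assume "\<exists>v :: real^2. v \<noteq> 0 \<and> v$2 = (l - a) * v$1 \<and> v$1 = (l - a) * v$2"
    then obtain v :: "real^2"
      where v: "v \<noteq> 0" and y: "v$2 = (l - a) * v$1" and x: "v$1 = (l - a) * v$2" by blast
    have "(l - a)^2 * v$1 = (l - a) * v$2" by (simp add: y power2_eq_square)
    then have sq1: "(l - a)^2 * v$1 = v$1" using x by simp
    have "(l - a)^2 * v$2 = (l - a) * v$1" by (simp add: x power2_eq_square)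
    then have sq2: "(l - a)^2 * v$2 = v$2" using y by simp
    from v sq1 sq2 show "(l - a)^2 = 1" unfolding nonzero by auto
  next
    assume "(l - a)^2 = 1"
    then show "\<exists>v :: real^2. v \<noteq> 0 \<and> v$2 = (l - a) * v$1 \<and> v$1 = (l - a) * v$2"
      by (intro exI[of _ "vector [1, l - a]"]) (auto simp: nonzero power2_eq_square)
  qed
  moreover have "(l - a)^2 = 1 \<longleftrightarrow> l = a - 1 \<or> l = a + 1" for l
    using power2_eq_1_iff[of "l - a"] by auto
  ultimately show ?thesis by (auto simp: matrix_mult eigen)
qed

section \<open>The alpha loop and the time along it\<close>

definition loop_point :: "real \<Rightarrow> real^2" where
  "loop_point v = vector [(1 - v^2) * v, v^2 - 1]"

lemma loop_point_components [simp]: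
  "loop_point v $ 1 = (1 - v^2) * v" "loop_point v $ 2 = v^2 - 1"
  by (simp_all add: loop_point_def)

lemma loop_point_has_vector_derivative:
  "(loop_point has_vector_derivative vector [1 - 3 * v^2, 2 * v]) (at v)"
  unfolding loop_point_def[abs_def] vector_2_eq_axis
  by (auto intro!: derivative_eq_intros simp: algebra_simps power2_eq_square)

lemma isCont_loop_point: "isCont loop_point v"
  using loop_point_has_vector_derivative by (rule has_vector_derivative_continuous)

lemma loop_point_endpoints: "loop_point 1 = 0" "loop_point (-1) = 0"
  by (simp_all add: vec_eq_iff forall_2)

lemma loop_point_image:
  "loop_point ` {-1<..<1} = {p. - ((p$1)^2) + ((p$2)^2) * (1 + p$2) = 0 \<and> p$2 < 0}"
proof (intro equalityI subsetI)
  fix p assume "p \<in> loop_point ` {-1<..<1}"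
  then obtain v where "\<bar>v\<bar> < 1" "p = loop_point v" by (auto simp: abs_less_iff)
  then show "p \<in> {p. - ((p$1)^2) + ((p$2)^2) * (1 + p$2) = 0 \<and> p$2 < 0}"
    using abs_square_less_1[of v] by (simp add: algebra_simps power2_eq_square)
next
  fix p :: "real^2" assume "p \<in> {p. - ((p$1)^2) + ((p$2)^2) * (1 + p$2) = 0 \<and> p$2 < 0}"
  then have loop: "(p$1)^2 = (p$2)^2 * (1 + p$2)" and neg: "p$2 < 0" by auto
  define v where "v = - (p$1) / (p$2)"
  have v2: "v^2 = 1 + p$2" using loop neg by (simp add: v_def power_divide field_simps)
  then have "\<bar>v\<bar> < 1" using neg abs_square_less_1[of v] by simp
  moreover have "loop_point v = p"
    using neg by (simp add: vec_eq_iff forall_2 v2) (simp add: v_def field_simps)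
  ultimately show "p \<in> loop_point ` {-1<..<1}" by force
qed

lemma cubic_le_max: "0 \<le> v \<Longrightarrow> (1 - v^2) * v \<le> 2 * sqrt 3 / 9"
proof -
  assume "0 \<le> v"
  define r where "r = sqrt 3"
  have "0 \<le> (v - r / 3)^2 * (v + 2 * r / 3)" using \<open>0 \<le> v\<close> by (simp add: r_def)
  also have "\<dots> = v^3 - (r * r) * v / 3 + 2 * (r * r) * r / 27"
    by (simp add: power2_eq_square power3_eq_cube field_simps)
  also have "\<dots> = v^3 - v + 2 * r / 9"
    by (simp add: r_def)
  finally show ?thesis by (simp add: r_def[symmetric] power2_eq_square power3_eq_cube algebra_simps)
qed

definition loop_speed :: "real \<Rightarrow> real \<Rightarrow> real" where
  "loop_speed a v = (1 - v^2) * (1 - a * v) / 2"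

lemma Fv_loop_point: "Fv a f 0 (loop_point v) = loop_speed a v *\<^sub>R vector [1 - 3 * v^2, 2 * v]"
  by (simp add: vec_eq_iff forall_2 Fv_def F1_def F2_def loop_speed_def field_simps power2_eq_square)

text \<open>A primitive of \<open>1 / loop_speed a\<close>, found by partial fractions.\<close>

definition loop_time :: "real \<Rightarrow> real \<Rightarrow> real" where
  "loop_time a v = - ln (1 - v) / (1 - a) + ln (1 + v) / (1 + a) + 2 * a / (1 - a^2) * ln (1 - a * v)"

definition loop_param :: "real \<Rightarrow> real \<Rightarrow> real" where
  "loop_param a = inv_into {-1<..<1} (loop_time a)"

locale homoclinic_parameter =
  fixes a :: real
  assumes a_gt_minus_one: "-1 < a" and a_neg: "a < 0"
begin

lemma one_minus_a_mult_pos: "\<bar>v\<bar> < 1 \<Longrightarrow> 0 < 1 - a * v"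
proof -
  assume "\<bar>v\<bar> < 1"
  moreover have "\<bar>a\<bar> * \<bar>v\<bar> \<le> \<bar>v\<bar>"
    using a_gt_minus_one a_neg by (intro mult_left_le_one_le) auto
  ultimately have "\<bar>a * v\<bar> < 1" by (simp add: abs_mult)
  then show ?thesis by linarith
qed

lemma loop_speed_pos: "\<bar>v\<bar> < 1 \<Longrightarrow> 0 < loop_speed a v"
  using one_minus_a_mult_pos[of v] abs_square_less_1[of v] by (simp add: loop_speed_def)

lemma loop_time_has_real_derivative:
  assumes "\<bar>v\<bar> < 1"
  shows "(loop_time a has_real_derivative inverse (loop_speed a v)) (at v)"
proof -
  have "0 < 1 - a * v" "0 < 1 - v" "0 < 1 + v" "0 < 1 - a" "0 < 1 + a"
    using one_minus_a_mult_pos assms a_gt_minus_one a_neg by auto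
  moreover have "1 - a^2 = (1 - a) * (1 + a)" "1 - v^2 = (1 - v) * (1 + v)"
    by (simp_all add: algebra_simps power2_eq_square)
  ultimately show ?thesis
    unfolding loop_time_def[abs_def] loop_speed_def
    by (auto intro!: derivative_eq_intros simp: divide_simps) (simp add: algebra_simps power2_eq_square)
qed

lemma isCont_loop_time: "\<bar>v\<bar> < 1 \<Longrightarrow> isCont (loop_time a) v"
  using loop_time_has_real_derivative by (rule DERIV_isCont)

lemma loop_time_strict_mono_on: "strict_mono_on {-1<..<1} (loop_time a)"
proof (rule strict_mono_onI)
  fix v w :: real assume "v \<in> {-1<..<1}" "w \<in> {-1<..<1}" "v < w"
  then have "\<bar>x\<bar> < 1" if "v \<le> x" "x \<le> w" for x
    using that by auto
  then show "loop_time a v < loop_time a w"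
    using loop_time_has_real_derivative loop_speed_pos
    by (intro DERIV_pos_imp_increasing[OF \<open>v < w\<close>]) (meson positive_imp_inverse_positive)
qed

lemma loop_time_unbounded_above: "\<exists>v. 0 \<le> v \<and> v < 1 \<and> t \<le> loop_time a v"
proof -
  define c where "c = 2 * a / (1 - a^2) * ln 2"
  define K where "K = max 0 ((1 - a) * (t - c))"
  define v where "v = 1 - exp (- K)"
  have v: "0 \<le> v" "v < 1" by (auto simp: v_def K_def)
  have "- a * v \<le> 1" using a_gt_minus_one a_neg v by (intro mult_le_one) auto
  then have "ln (1 - a * v) \<le> ln 2"
    using one_minus_a_mult_pos[of v] v by (subst ln_le_cancel_iff) auto
  moreover have "2 * a / (1 - a^2) \<le> 0"
    using a_neg a_gt_minus_one abs_square_less_1[of a] by (intro divide_nonpos_pos) auto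
  ultimately have "c \<le> 2 * a / (1 - a^2) * ln (1 - a * v)"
    unfolding c_def by (intro mult_left_mono_neg)
  moreover have "0 \<le> ln (1 + v) / (1 + a)" using v a_gt_minus_one by auto
  moreover have "t - c \<le> - ln (1 - v) / (1 - a)"
    using a_neg by (auto simp: v_def K_def field_simps)
  ultimately have "t \<le> loop_time a v" unfolding loop_time_def by linarith
  with v show ?thesis by blast
qed

lemma loop_time_unbounded_below: "\<exists>v. -1 < v \<and> v \<le> 0 \<and> loop_time a v \<le> t"
proof -
  define c where "c = 2 * a / (1 - a^2) * ln (1 + a)"
  define K where "K = max 0 ((1 + a) * (c - t))"
  define v where "v = exp (- K) - 1"
  have v: "-1 < v" "v \<le> 0" by (auto simp: v_def K_def)
  have "- a * - v \<le> - a" using v a_neg by (intro mult_left_le) auto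
  then have "ln (1 + a) \<le> ln (1 - a * v)"
    using one_minus_a_mult_pos[of v] v a_gt_minus_one by (subst ln_le_cancel_iff) auto
  moreover have "2 * a / (1 - a^2) \<le> 0"
    using a_neg a_gt_minus_one abs_square_less_1[of a] by (intro divide_nonpos_pos) auto
  ultimately have "2 * a / (1 - a^2) * ln (1 - a * v) \<le> c"
    unfolding c_def by (intro mult_left_mono_neg)
  moreover have "- ln (1 - v) / (1 - a) \<le> 0" using v a_neg by (auto intro!: divide_nonpos_pos)
  moreover have "ln (1 + v) / (1 + a) \<le> t - c"
    using a_gt_minus_one by (auto simp: v_def K_def field_simps)
  ultimately have "loop_time a v \<le> t" unfolding loop_time_def by linarith
  with v show ?thesis by blast
qed

lemma loop_time_image: "loop_time a ` {-1<..<1} = UNIV"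
proof -
  have "t \<in> loop_time a ` {-1<..<1}" for t
  proof -
    obtain v1 where v1: "-1 < v1" "v1 \<le> 0" "loop_time a v1 \<le> t"
      using loop_time_unbounded_below by blast
    obtain v2 where v2: "0 \<le> v2" "v2 < 1" "t \<le> loop_time a v2"
      using loop_time_unbounded_above by blast
    have "continuous_on {v1..v2} (loop_time a)"
      using v1 v2 by (intro continuous_at_imp_continuous_on ballI isCont_loop_time) auto
    with v1 v2 obtain v where "v1 \<le> v" "v \<le> v2" "loop_time a v = t"
      using IVT'[of "loop_time a" v1 t v2] by auto
    with v1 v2 show ?thesis by (intro image_eqI[of _ _ v]) auto
  qed
  then show ?thesis by blast
qed

lemma inj_on_loop_time: "inj_on (loop_time a) {-1<..<1}"
  using loop_time_strict_mono_on by (rule strict_mono_on_imp_inj_on)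

lemma loop_param_bounds: "-1 < loop_param a t" "loop_param a t < 1"
  and loop_time_loop_param: "loop_time a (loop_param a t) = t"
  using inv_into_into[of t "loop_time a" "{-1<..<1}"] f_inv_into_f[of t "loop_time a" "{-1<..<1}"]
  by (auto simp: loop_param_def loop_time_image)

lemma loop_param_loop_time: "-1 < v \<Longrightarrow> v < 1 \<Longrightarrow> loop_param a (loop_time a v) = v"
  unfolding loop_param_def using inv_into_f_f[OF inj_on_loop_time] by auto

lemma loop_param_0: "loop_param a 0 = 0"
  using loop_param_loop_time[of 0] by (simp add: loop_time_def)

lemma strict_mono_loop_param: "strict_mono (loop_param a)"
proof (rule strict_monoI)
  fix s t :: real assume "s < t"
  show "loop_param a s < loop_param a t"
  proof (rule ccontr)
    assume "\<not> ?thesis"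
    then have "loop_time a (loop_param a t) \<le> loop_time a (loop_param a s)"
      using loop_param_bounds by (intro strict_mono_on_leD[OF loop_time_strict_mono_on]) auto
    with \<open>s < t\<close> show False by (simp add: loop_time_loop_param)
  qed
qed

lemma isCont_loop_param: "isCont (loop_param a) t"
proof -
  define w where "w = loop_param a t"
  have w: "-1 < w" "w < 1" using loop_param_bounds by (auto simp: w_def)
  define d where "d = min (w + 1) (1 - w) / 2"
  have "0 < d" using w by (auto simp: d_def)
  moreover have "-1 < z \<and> z < 1" if "\<bar>z - w\<bar> \<le> d" for z
  proof -
    have "z - w \<le> d" "w - z \<le> d" using that by (auto simp: abs_le_iff)
    moreover have "d \<le> (w + 1) / 2" "d \<le> (1 - w) / 2" by (auto simp: d_def)
    ultimately show ?thesis using w by auto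
  qed
  ultimately have "isCont (loop_param a) (loop_time a w)"
    by (intro isCont_inverse_function[where f = "loop_time a"])
       (auto simp: loop_param_loop_time abs_less_iff intro!: isCont_loop_time)
  then show ?thesis by (simp add: w_def loop_time_loop_param)
qed

lemma loop_param_has_real_derivative:
  "(loop_param a has_real_derivative loop_speed a (loop_param a t)) (at t)"
proof -
  have v: "\<bar>loop_param a t\<bar> < 1" using loop_param_bounds[of t] by auto
  have "(loop_param a has_real_derivative inverse (inverse (loop_speed a (loop_param a t)))) (at t)"
    using loop_speed_pos[OF v]
    by (intro DERIV_inverse_function[where f = "loop_time a" and a = "t - 1" and b = "t + 1"]
          loop_time_has_real_derivative v)
       (auto simp: loop_time_loop_param isCont_loop_param)
  then show ?thesis by simp
qed

lemma loop_param_tendsto_at_top: "(loop_param a \<longlongrightarrow> 1) at_top"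
proof (rule order_tendstoI)
  fix y :: real assume "y < 1"
  define z where "z = max y 0"
  have z: "-1 < z" "z < 1" "y \<le> z" using \<open>y < 1\<close> by (auto simp: z_def)
  have "y < loop_param a s" if "loop_time a z < s" for s
    using strict_monoD[OF strict_mono_loop_param that] z by (simp add: loop_param_loop_time)
  then show "\<forall>\<^sub>F s in at_top. y < loop_param a s"
    by (auto simp: eventually_at_top_dense)
next
  fix y :: real assume "1 < y"
  then show "\<forall>\<^sub>F s in at_top. loop_param a s < y"
    using loop_param_bounds(2) less_trans by (intro always_eventually) blast
qed

lemma loop_param_tendsto_at_bot: "(loop_param a \<longlongrightarrow> -1) at_bot"
proof (rule order_tendstoI)
  fix y :: real assume "-1 < y"
  define z where "z = min y 0"
  have z: "-1 < z" "z < 1" "z \<le> y" using \<open>-1 < y\<close> by (auto simp: z_def)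
  have "loop_param a s < y" if "s < loop_time a z" for s
    using strict_monoD[OF strict_mono_loop_param that] z by (simp add: loop_param_loop_time)
  then show "\<forall>\<^sub>F s in at_bot. loop_param a s < y"
    by (auto simp: eventually_at_bot_dense)
next
  fix y :: real assume "y < -1"
  then show "\<forall>\<^sub>F s in at_bot. y < loop_param a s"
    using loop_param_bounds(1) less_trans by (intro always_eventually) blast
qed

end

section \<open>The homoclinic orbit\<close>

definition homoclinic_orbit :: "real \<Rightarrow> real \<Rightarrow> real^2" where
  "homoclinic_orbit a t = loop_point (loop_param a t)"

context homoclinic_parameter
begin

lemma homoclinic_orbit_has_vector_derivative:
  "(homoclinic_orbit a has_vector_derivative Fv a f 0 (homoclinic_orbit a t)) (at t)"
  using vector_diff_chain_at[OF loop_param_has_real_derivative[unfolded has_real_derivative_iff_has_vector_derivative]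
      loop_point_has_vector_derivative]
  by (simp add: homoclinic_orbit_def[abs_def] o_def Fv_loop_point)

lemma homoclinic_orbit_0: "homoclinic_orbit a 0 = (\<chi> i. if i = 1 then 0 else -1)"
  by (simp add: homoclinic_orbit_def loop_param_0 vec_eq_iff forall_2)

lemma range_homoclinic_orbit:
  "range (homoclinic_orbit a) = {p. - ((p$1)^2) + ((p$2)^2) * (1 + p$2) = 0 \<and> p$2 < 0}"
proof -
  have "range (homoclinic_orbit a) = loop_point ` range (loop_param a)"
    by (simp add: homoclinic_orbit_def[abs_def] image_image)
  also have "range (loop_param a) = {-1<..<1}"
    using loop_param_bounds loop_param_loop_time by (auto simp: image_iff) metis
  finally show ?thesis by (simp only: loop_point_image)
qed

lemma homoclinic_orbit_tendsto_at_top: "(homoclinic_orbit a \<longlongrightarrow> 0) at_top"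
  using isCont_tendsto_compose[OF isCont_loop_point loop_param_tendsto_at_top]
  by (simp add: homoclinic_orbit_def[abs_def] loop_point_endpoints)

lemma homoclinic_orbit_tendsto_at_bot: "(homoclinic_orbit a \<longlongrightarrow> 0) at_bot"
  using isCont_tendsto_compose[OF isCont_loop_point loop_param_tendsto_at_bot]
  by (simp add: homoclinic_orbit_def[abs_def] loop_point_endpoints)

end

section \<open>The Melnikov integral\<close>

lemma divF_eq: "divF a f 0 p = 2 * a + 7/2 * a * p$2"
proof -
  have "((\<lambda>y. F1 a f 0 y (p$2)) has_real_derivative a + 3/2 * a * p$2) (at (p$1))"
    unfolding F1_def by (auto intro!: derivative_eq_intros)
  moreover have "((\<lambda>y. F2 a 0 (p$1) y) has_real_derivative a + 2 * a * p$2) (at (p$2))"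
    unfolding F2_def by (auto intro!: derivative_eq_intros)
  ultimately show ?thesis unfolding divF_def by (simp add: DERIV_imp_deriv algebra_simps)
qed

lemma melnikov_integrand_eq:
  "melnikov_integrand a f x t =
     - exp (- oint t (\<lambda>\<tau>. divF a f 0 (x \<tau>))) * F2 a 0 (x t $ 1) (x t $ 2) * f (x t $ 1)"
proof -
  have "((\<lambda>\<alpha>. F1 a f \<alpha> x1 x2) has_real_derivative f x1) (at 0)" for x1 x2
    unfolding F1_def by (auto intro!: derivative_eq_intros)
  then show ?thesis by (simp add: melnikov_integrand_def F2_def DERIV_imp_deriv)
qed

text \<open>\<open>exp (log_weight a v)\<close> is the weight \<open>\<phi>\<close> at the point of the orbit with parameter \<open>v\<close>,
  and \<open>melnikov_density a f\<close> is the Melnikov integrand after the substitution \<open>t = loop_time a v\<close>.\<close>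

definition log_weight :: "real \<Rightarrow> real \<Rightarrow> real" where
  "log_weight a v = 2 * a / (1 - a) * ln (1 - v) - 2 * a / (1 + a) * ln (1 + v)
     + (7 - 3 * a^2) / (a^2 - 1) * ln (1 - a * v)"

definition melnikov_density :: "real \<Rightarrow> (real \<Rightarrow> real) \<Rightarrow> real \<Rightarrow> real" where
  "melnikov_density a f v = - 2 * v * exp (log_weight a v) * f ((1 - v^2) * v)"

context homoclinic_parameter
begin

lemma log_weight_has_real_derivative:
  assumes "\<bar>v\<bar> < 1"
  shows "(log_weight a has_real_derivative - (2 * a + 7/2 * a * (v^2 - 1)) / loop_speed a v) (at v)"
proof -
  have "0 < 1 - a * v" "0 < 1 - v" "0 < 1 + v" "0 < 1 - a" "0 < 1 + a"
    using one_minus_a_mult_pos assms a_gt_minus_one a_neg by auto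
  moreover have "a^2 - 1 = - ((1 - a) * (1 + a))" "1 - v^2 = (1 - v) * (1 + v)"
    by (simp_all add: algebra_simps power2_eq_square)
  ultimately show ?thesis
    unfolding log_weight_def[abs_def] loop_speed_def
    by (auto intro!: derivative_eq_intros simp: divide_simps) (simp add: algebra_simps power2_eq_square)
qed

lemma isCont_log_weight: "\<bar>v\<bar> < 1 \<Longrightarrow> isCont (log_weight a) v"
  using log_weight_has_real_derivative by (rule DERIV_isCont)

lemma oint_divF_homoclinic_orbit:
  "oint t (\<lambda>\<tau>. divF a f 0 (homoclinic_orbit a \<tau>)) = - log_weight a (loop_param a t)"
proof -
  let ?g = "\<lambda>t. - log_weight a (loop_param a t)"
  have "(?g has_real_derivative divF a f 0 (homoclinic_orbit a s)) (at s)" for s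
  proof -
    have v: "\<bar>loop_param a s\<bar> < 1" using loop_param_bounds[of s] by auto
    have "(?g has_real_derivative - (- (2 * a + 7/2 * a * ((loop_param a s)^2 - 1))
            / loop_speed a (loop_param a s) * loop_speed a (loop_param a s))) (at s)"
      by (intro DERIV_minus DERIV_chain2[OF log_weight_has_real_derivative[OF v] loop_param_has_real_derivative])
    then show ?thesis
      using loop_speed_pos[OF v] by (simp add: divF_eq homoclinic_orbit_def add.commute)
  qed
  then have deriv: "(?g has_vector_derivative divF a f 0 (homoclinic_orbit a s)) (at s within S)" for s S
    by (simp add: has_real_derivative_iff_has_vector_derivative[symmetric] has_field_derivative_at_within)
  have g0: "?g 0 = 0" by (simp add: loop_param_0 log_weight_def)
  show ?thesis
  proof (cases "0 \<le> t")
    case True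
    then have "((\<lambda>\<tau>. divF a f 0 (homoclinic_orbit a \<tau>)) has_integral ?g t - ?g 0) {0..t}"
      by (intro fundamental_theorem_of_calculus deriv)
    with True g0 show ?thesis by (simp add: oint_def integral_unique)
  next
    case False
    then have "((\<lambda>\<tau>. divF a f 0 (homoclinic_orbit a \<tau>)) has_integral ?g 0 - ?g t) {t..0}"
      by (intro fundamental_theorem_of_calculus deriv) auto
    with False g0 show ?thesis by (simp add: oint_def integral_unique)
  qed
qed

lemma melnikov_integrand_homoclinic_orbit:
  assumes "\<bar>v\<bar> < 1"
  shows "melnikov_integrand a f (homoclinic_orbit a) (loop_time a v) = loop_speed a v * melnikov_density a f v"
proof -
  have "loop_param a (loop_time a v) = v" using assms by (simp add: loop_param_loop_time abs_less_iff)
  then show ?thesis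
    unfolding melnikov_integrand_eq oint_divF_homoclinic_orbit
    by (simp add: homoclinic_orbit_def F2_def melnikov_density_def loop_speed_def algebra_simps power2_eq_square)
qed

lemma exp_log_weight_bound:
  "\<exists>C. \<forall>v. \<bar>v\<bar> < 1 \<longrightarrow> exp (log_weight a v) * (1 - v^2) \<le> C"
proof -
  define k1 k2 k3 where "k1 = 2 * a / (1 - a) + 1" and "k2 = 1 - 2 * a / (1 + a)"
    and "k3 = (7 - 3 * a^2) / (a^2 - 1)"
  have k: "0 < k1" "0 < k2" "k3 < 0"
    using a_gt_minus_one a_neg abs_square_less_1[of a]
    by (auto simp: k1_def k2_def k3_def field_simps intro!: divide_pos_neg)
  have "exp (log_weight a v) * (1 - v^2) \<le> exp (k1 * ln 2 + k2 * ln 2 + k3 * ln (1 + a))"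
    if v: "\<bar>v\<bar> < 1" for v
  proof -
    have "1 - v^2 = exp (ln (1 - v) + ln (1 + v))"
      using v by (simp add: exp_add power2_eq_square algebra_simps)
    moreover have "log_weight a v + (ln (1 - v) + ln (1 + v))
                     = k1 * ln (1 - v) + k2 * ln (1 + v) + k3 * ln (1 - a * v)"
      by (simp add: log_weight_def k1_def k2_def k3_def algebra_simps)
    ultimately have "exp (log_weight a v) * (1 - v^2) = exp (k1 * ln (1 - v) + k2 * ln (1 + v) + k3 * ln (1 - a * v))"
      by (metis exp_add)
    moreover have "k1 * ln (1 - v) \<le> k1 * ln 2" "k2 * ln (1 + v) \<le> k2 * ln 2"
      using k v by (auto intro!: mult_left_mono)
    moreover have "a * (1 + v) \<le> 0" using a_neg v by (intro mult_nonpos_nonneg) auto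
    then have "ln (1 + a) \<le> ln (1 - a * v)"
      using a_gt_minus_one one_minus_a_mult_pos[OF v] by (subst ln_le_cancel_iff) (auto simp: algebra_simps)
    then have "k3 * ln (1 - a * v) \<le> k3 * ln (1 + a)"
      using k by (intro mult_left_mono_neg) auto
    ultimately show ?thesis by simp
  qed
  then show ?thesis by blast
qed

end

locale melnikov_setting = homoclinic_parameter +
  fixes f :: "real \<Rightarrow> real"
  assumes f_differentiable: "\<And>x. f differentiable (at x)"
    and isCont_deriv_f: "\<And>x. isCont (deriv f) x"
    and f_odd: "\<And>x. f (- x) = - f x"
    and f_nonzero: "\<And>x. - 2 * sqrt 3 / 9 \<le> x \<Longrightarrow> x < 0 \<Longrightarrow> f x \<noteq> 0"
begin

lemma isCont_f: "isCont f x"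
  using f_differentiable by (rule differentiable_imp_continuous_within)

lemma isCont_melnikov_density: "\<bar>v\<bar> < 1 \<Longrightarrow> isCont (melnikov_density a f) v"
  unfolding melnikov_density_def[abs_def]
  by (intro continuous_intros isCont_o2[OF _ isCont_f] isCont_log_weight)

lemma melnikov_density_bounded: "\<exists>M. \<forall>v. \<bar>v\<bar> < 1 \<longrightarrow> \<bar>melnikov_density a f v\<bar> \<le> M"
proof -
  obtain K where K: "0 \<le> K" "\<And>y. \<bar>y\<bar> \<le> 1 \<Longrightarrow> \<bar>f y\<bar> \<le> K * \<bar>y\<bar>"
    using linear_bound_near_zero[OF f_differentiable isCont_deriv_f] f_odd[of 0] by auto
  obtain C where C: "\<And>v. \<bar>v\<bar> < 1 \<Longrightarrow> exp (log_weight a v) * (1 - v^2) \<le> C"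
    using exp_log_weight_bound by blast
  have "\<bar>melnikov_density a f v\<bar> \<le> 2 * K * C" if v: "\<bar>v\<bar> < 1" for v
  proof -
    have q: "0 \<le> 1 - v^2" "\<bar>v\<bar> * \<bar>v\<bar> \<le> 1"
      using v abs_square_less_1[of v] by (auto intro!: mult_le_one simp del: abs_mult_self_eq)
    have cubic: "\<bar>(1 - v^2) * v\<bar> = (1 - v^2) * \<bar>v\<bar>" using q by (simp add: abs_mult)
    have "(1 - v^2) * \<bar>v\<bar> \<le> 1" using q v by (intro mult_le_one) auto
    then have "\<bar>f ((1 - v^2) * v)\<bar> \<le> K * ((1 - v^2) * \<bar>v\<bar>)"
      using K(2)[of "(1 - v^2) * v"] cubic by simp
    then have "\<bar>melnikov_density a f v\<bar> \<le> 2 * \<bar>v\<bar> * exp (log_weight a v) * (K * ((1 - v^2) * \<bar>v\<bar>))"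
      by (simp add: melnikov_density_def abs_mult mult_left_mono)
    also have "\<dots> = 2 * K * (exp (log_weight a v) * (1 - v^2)) * (\<bar>v\<bar> * \<bar>v\<bar>)"
      by (simp add: algebra_simps)
    also have "\<dots> \<le> 2 * K * C * 1"
      using C[OF v] K(1) q order_trans[OF _ C[OF v], of 0]
      by (intro mult_mono mult_left_mono mult_nonneg_nonneg) auto
    finally show ?thesis by simp
  qed
  then show ?thesis by blast
qed

lemma absolutely_integrable_melnikov_density:
  "melnikov_density a f absolutely_integrable_on {-1<..<1}"
proof -
  obtain M where M: "\<And>v. \<bar>v\<bar> < 1 \<Longrightarrow> \<bar>melnikov_density a f v\<bar> \<le> M"
    using melnikov_density_bounded by blast
  have "continuous_on {-1<..<1} (melnikov_density a f)"
    by (intro continuous_at_imp_continuous_on ballI isCont_melnikov_density) auto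
  then have "melnikov_density a f \<in> borel_measurable (lebesgue_on {-1<..<1})"
    by (rule continuous_imp_measurable_on_sets_lebesgue) simp
  moreover have "(\<lambda>_. M) integrable_on {-1<..<(1::real)}"
    using integrable_const[of M "-1" "1::real"] by (simp add: integrable_on_open_interval_real)
  ultimately show ?thesis
    using M by (intro measurable_bounded_by_integrable_imp_absolutely_integrable) auto
qed

lemma has_integral_melnikov_integrand:
  "(melnikov_integrand a f (homoclinic_orbit a) has_integral integral {-1<..<1} (melnikov_density a f)) UNIV"
proof -
  define h where
    "h v = \<bar>inverse (loop_speed a v)\<bar> * melnikov_integrand a f (homoclinic_orbit a) (loop_time a v)" for v
  have h: "h v = melnikov_density a f v" if "v \<in> {-1<..<1}" for v
    using that loop_speed_pos[of v] by (simp add: h_def melnikov_integrand_homoclinic_orbit abs_less_iff)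
  have "h absolutely_integrable_on {-1<..<1}"
    using absolutely_integrable_melnikov_density
    by (rule absolutely_integrable_spike[OF _ negligible_empty]) (simp add: h)
  moreover have "integral {-1<..<1} h = integral {-1<..<1} (melnikov_density a f)"
    by (rule integral_spike[OF negligible_empty]) (simp add: h)
  moreover have "(loop_time a has_field_derivative inverse (loop_speed a v)) (at v within {-1<..<1})"
    if "v \<in> {-1<..<1}" for v
    using that loop_time_has_real_derivative[of v] by (auto intro: has_field_derivative_at_within)
  ultimately have "melnikov_integrand a f (homoclinic_orbit a) absolutely_integrable_on UNIV \<and>
      integral UNIV (melnikov_integrand a f (homoclinic_orbit a)) = integral {-1<..<1} (melnikov_density a f)"
    using has_absolute_integral_change_of_variables_1'[of "{-1<..<1}" "loop_time a"
        "\<lambda>v. inverse (loop_speed a v)" "melnikov_integrand a f (homoclinic_orbit a)"] inj_on_loop_time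
    unfolding h_def loop_time_image by auto
  then show ?thesis by (metis absolutely_integrable_on_def integrable_integral)
qed

lemma melnikov_density_sign:
  assumes "\<bar>v\<bar> < 1" "v \<noteq> 0"
  shows "0 < f (- 2 * sqrt 3 / 9) * melnikov_density a f v"
proof -
  have same_sign: "0 < f y * f (- 2 * sqrt 3 / 9)" if "- 2 * sqrt 3 / 9 \<le> y" "y < 0" for y
    using that f_nonzero isCont_f
    by (intro continuous_zero_free_same_sign[where d = 0] continuous_at_imp_continuous_on) auto
  have pos: "0 < 1 - v^2" using assms abs_square_less_1[of v] by auto
  have "0 < (- 2 * v) * (f ((1 - v^2) * v) * f (- 2 * sqrt 3 / 9))"
  proof (cases "v < 0")
    case True
    then have "- 2 * sqrt 3 / 9 \<le> (1 - v^2) * v" "(1 - v^2) * v < 0"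
      using cubic_le_max[of "- v"] pos by (auto simp: mult_pos_neg)
    then have "0 < f ((1 - v^2) * v) * f (- 2 * sqrt 3 / 9)" by (rule same_sign)
    then show ?thesis by (rule mult_pos_pos[rotated]) (use True in simp)
  next
    case False
    then have "- 2 * sqrt 3 / 9 \<le> - ((1 - v^2) * v)" "- ((1 - v^2) * v) < 0"
      using cubic_le_max[of v] pos assms(2) by auto
    then have "f ((1 - v^2) * v) * f (- 2 * sqrt 3 / 9) < 0"
      using same_sign[of "- ((1 - v^2) * v)"] by (simp add: f_odd)
    then show ?thesis by (rule mult_neg_neg[rotated]) (use False assms(2) in simp)
  qed
  then have "0 < exp (log_weight a v) * ((- 2 * v) * (f ((1 - v^2) * v) * f (- 2 * sqrt 3 / 9)))"
    by (rule mult_pos_pos[OF exp_gt_zero])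
  then show ?thesis by (simp add: melnikov_density_def algebra_simps)
qed

lemma integral_melnikov_density_nonzero: "integral {-1<..<1} (melnikov_density a f) \<noteq> 0"
proof -
  let ?\<sigma> = "f (- 2 * sqrt 3 / 9)"
  have "integral {-1<..<1} (\<lambda>v. ?\<sigma> * melnikov_density a f v) = ?\<sigma> * integral {-1<..<1} (melnikov_density a f)"
    using absolutely_integrable_melnikov_density by (simp add: set_lebesgue_integral_eq_integral)
  moreover have "0 < integral {-1<..<1} (\<lambda>v. ?\<sigma> * melnikov_density a f v)"
  proof (rule integral_pos_if_pos_on_subinterval[where c = "1/4" and d = "1/2"])
    show "(\<lambda>v. ?\<sigma> * melnikov_density a f v) integrable_on {-1<..<1}"
      using absolutely_integrable_melnikov_density by (simp add: set_lebesgue_integral_eq_integral)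
    show "continuous_on {1/4..1/2} (\<lambda>v. ?\<sigma> * melnikov_density a f v)"
      by (intro continuous_intros continuous_at_imp_continuous_on ballI isCont_melnikov_density) auto
    show "0 \<le> ?\<sigma> * melnikov_density a f v" if "v \<in> {-1<..<1}" for v
    proof (cases "v = 0")
      case False
      with that show ?thesis by (intro less_imp_le melnikov_density_sign) auto
    qed (simp add: melnikov_density_def)
    show "0 < ?\<sigma> * melnikov_density a f v" if "v \<in> {1/4<..<1/2}" for v
      using that by (intro melnikov_density_sign) auto
  qed auto
  ultimately show ?thesis by auto
qed

end

theorem theorem5:
  fixes a :: real and f :: "real \<Rightarrow> real"
  assumes a_range: "-1 < a" "a < 0"
    and smooth: "\<forall>n x. ((deriv ^^ n) f) differentiable (at x)"
    and odd: "\<forall>x. f (-x) = - f x"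
    and nonzero: "\<forall>x. - 2 * sqrt 3 / 9 \<le> x \<and> x < 0 \<longrightarrow> f x \<noteq> 0"
  shows
    "Fv a f 0 0 = 0 \<and>
     (\<exists>D l1 l2. (Fv a f 0 has_derivative D) (at 0) \<and>
        {l. \<exists>v. v \<noteq> 0 \<and> matrix D *v v = l *\<^sub>R v} = {l1, l2} \<and>
        l1 < 0 \<and> 0 < l2 \<and> l1 + l2 \<noteq> 0 \<and> l1 + l2 < 0) \<and>
     (\<exists>x :: real \<Rightarrow> real^2.
        (\<forall>t. (x has_vector_derivative Fv a f 0 (x t)) (at t)) \<and>
        x 0 = (\<chi> i. if i = 1 then 0 else -1) \<and>
        range x = {p. - ((p$1)^2) + ((p$2)^2) * (1 + p$2) = 0 \<and> p$2 < 0} \<and>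
        omega_limit x = {0} \<and> alpha_limit x = {0} \<and>
        (\<exists>M. (melnikov_integrand a f x has_integral M) UNIV \<and> M \<noteq> 0))"
proof -
  interpret melnikov_setting a f
  proof
    show "f differentiable (at x)" for x
      using smooth[rule_format, of 0] by simp
    show "isCont (deriv f) x" for x
      using smooth[rule_format, of 1] by (simp add: differentiable_imp_continuous_within)
  qed (use a_range odd nonzero in auto)
  have saddle: "\<exists>D l1 l2. (Fv a f 0 has_derivative D) (at 0) \<and>
      {l. \<exists>v. v \<noteq> 0 \<and> matrix D *v v = l *\<^sub>R v} = {l1, l2} \<and>
      l1 < 0 \<and> 0 < l2 \<and> l1 + l2 \<noteq> 0 \<and> l1 + l2 < 0"
    using Fv_has_derivative_origin eigenvalues_linearisation a_range
    by (intro exI[of _ "linearisation a"] exI[of _ "a - 1"] exI[of _ "a + 1"]) auto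
  have "\<exists>M. (melnikov_integrand a f (homoclinic_orbit a) has_integral M) UNIV \<and> M \<noteq> 0"
    using has_integral_melnikov_integrand integral_melnikov_density_nonzero by blast
  then show ?thesis
    using Fv_origin saddle homoclinic_orbit_has_vector_derivative homoclinic_orbit_0
      range_homoclinic_orbit omega_limit_tendsto[OF homoclinic_orbit_tendsto_at_top]
      alpha_limit_tendsto[OF homoclinic_orbit_tendsto_at_bot]
    by blast
qed

end
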